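(* Let $n\ge1$, $\mathbf{k}=(k_1,\dots,k_n)$ positive integers, $N=n+|\mathbf{k}|$, and $D\in\mathcal{D}_{\mathbf{k}}$. Then the sequence $\sigma(D)$ of indices written by the Walking Algorithm on $(T(D),R(D))$ has length $N$.
   Context: $|\mathbf{k}|=k_1+\cdots+k_n$. $\mathcal{D}_{\mathbf{k}}$: sequences $(a_1,\dots,a_N)$ whose positive entries are $k_1,\dots,k_n$ in order, other entries $-1$, all partial sums $a_1+\cdots+a_{i-1}\ge0$. SW-word: $S^{k_j}$ for up step $k_j$, $W$ for $-1$. Filling Algorithm producing $T(D)$: $n$ columns, column $i$ with $k_i+1$ cells in rows $1,\dots,k_i+1$; place $1$ at top of column 1; having placed $1,\dots,i-1$, the lowest filled entry of column $j$ is active if not in row $k_j+1$; if the $i$-th letter is $W$ place $i$ below the smallest active entry, otherwise at the top of the leftmost empty column; continue until $1,\dots,N$ placed. Entries of $T(D)$ are indices. Ranking Algorithm producing $R(D)$: ranks $0,\dots,k_1$ to column-1 indices top to bottom; for $i=2,\dots,n$, if the top index of column $i$ is $A+1$ and index $A$ has rank $a$, column $i$ gets ranks $a,\dots,a+k_i$ top to bottom. Among boxes of equal rank, the largest is the one with largest index. Walking Algorithm: go to the largest rank-$0$ box, mark it, write its index. Repeat: if the current box is in row 1 of column $i$, let $r$ be the rank of the bottom box (row $k_i+1$) of column $i$; otherwise let $r$ be the rank of the box directly above. If an unmarked box of rank $r$ exists, go to the unmarked rank-$r$ box with largest index, mark it and write its index; otherwise stop. $\sigma(D)$ is the sequence of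 written indices. *)

theory Defs
  imports Main
begin

text \<open>Compositions k = (k_1,...,k_n) are lists ks; N = n + |k|.
  Columns and indices into ks are 0-based internally; rows are 1-based.\<close>

definition bigN :: "nat list \<Rightarrow> nat" where
  "bigN ks = length ks + sum_list ks"

definition in_Dk :: "nat list \<Rightarrow> int list \<Rightarrow> bool" where
  "in_Dk ks D \<longleftrightarrow>
     length D = bigN ks \<and>
     filter (\<lambda>a. a > 0) D = map int ks \<and>
     (\<forall>a\<in>set D. a > 0 \<or> a = -1) \<and>
     (\<forall>i<length D. sum_list (take i D) \<ge> 0)"

text \<open>Filling algorithm. A tableau is a list of columns, each column the list of
  its entries (indices) from top (row 1) downwards.\<close>

definition active :: "nat list \<Rightarrow> nat list list \<Rightarrow> nat \<Rightarrow> bool" where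
  "active ks cols j \<longleftrightarrow> j < length ks \<and> cols ! j \<noteq> [] \<and> length (cols ! j) \<noteq> ks ! j + 1"

definition fill_step :: "nat list \<Rightarrow> nat list list \<Rightarrow> nat \<times> int \<Rightarrow> nat list list" where
  "fill_step ks cols ia = (case ia of (i, a) \<Rightarrow>
     if a = -1 then
       (let m = Min {last (cols ! j) | j. active ks cols j};
            c = (LEAST j. active ks cols j \<and> last (cols ! j) = m)
        in cols[c := cols ! c @ [i]])
     else
       (let c = (LEAST j. j < length ks \<and> cols ! j = [])
        in cols[c := [i]]))"

definition fillT :: "nat list \<Rightarrow> int list \<Rightarrow> nat list list" where
  "fillT ks D = foldl (fill_step ks) ([1] # replicate (length ks - 1) [])
                      (zip [2..<bigN ks + 1] (tl D))"

definition boxes :: "nat list list \<Rightarrow> nat set" where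
  "boxes T = (\<Union>c\<in>set T. set c)"

definition col_of :: "nat list list \<Rightarrow> nat \<Rightarrow> nat" where
  "col_of T x = (THE j. j < length T \<and> x \<in> set (T ! j))"

definition row_of :: "nat list list \<Rightarrow> nat \<Rightarrow> nat" where
  "row_of T x = (THE r. r < length (T ! col_of T x) \<and> T ! col_of T x ! r = x) + 1"

text \<open>Ranking algorithm: base_list T j lists the ranks of the top boxes of columns 0..j-1.\<close>
fun base_list :: "nat list list \<Rightarrow> nat \<Rightarrow> nat list" where
  "base_list T 0 = []"
| "base_list T (Suc j) =
     (let bs = base_list T j in
      bs @ [if j = 0 then 0
            else (let A = hd (T ! j) - 1; c = col_of T A in bs ! c + (row_of T A - 1))])"

definition rank :: "nat list list \<Rightarrow> nat \<Rightarrow> nat" where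
  "rank T x = base_list T (length T) ! col_of T x + (row_of T x - 1)"

definition target_rank :: "nat list \<Rightarrow> nat list list \<Rightarrow> nat \<Rightarrow> nat" where
  "target_rank ks T x =
     (let c = col_of T x; r = row_of T x in
      if r = 1 then rank T (T ! c ! (ks ! c))
      else rank T (T ! c ! (r - 2)))"

fun walk :: "nat list \<Rightarrow> nat list list \<Rightarrow> nat \<Rightarrow> nat \<Rightarrow> nat set \<Rightarrow> nat list" where
  "walk ks T 0 cur M = []"
| "walk ks T (Suc f) cur M =
     (let C = {x \<in> boxes T. x \<notin> M \<and> rank T x = target_rank ks T cur} in
      if C = {} then [] else Max C # walk ks T f (Max C) (insert (Max C) M))"

definition sigma :: "nat list \<Rightarrow> int list \<Rightarrow> nat list" where
  "sigma ks D =
     (let T = fillT ks D; s = Max {x \<in> boxes T. rank T x = 0} in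
      s # walk ks T (bigN ks) s {s})"

end

theory Submission
  imports Defs "HOL-Library.Sublist"
begin

text \<open>
  Read a box x as an edge from vertex rank x to vertex target_rank x. A column carrying the
  ranks b, ..., b + k is sent by target_rank onto the same ranks shifted cyclically, so every
  vertex has as many incoming as outgoing edges, and the Walking Algorithm follows a trail of
  unused edges starting at vertex 0. As in Euler's argument, such a trail can only get stuck at
  vertex 0, once every edge leaving 0 has been used. Boxes of equal rank are taken in decreasing
  order of index, so the last edge used out of a vertex rho > 0 is its box of smallest index,
  and that box points to rho - 1 (if it is the top of a column, the box with the preceding index
  has the same rank). Now if a box were never visited, take one of minimal rank rho > 0: every
  edge leaving rho - 1 has been used, hence by balance every edge entering it, including the
  smallest box of rank rho, which is the last of its rank to be visited; a contradiction.

  The Filling Algorithm always finds an active column and ends with every column full because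
  the free cells of the opened columns always number exactly the current height of the path.
\<close>

lemma boxes_conv_nth: "boxes cols = (\<Union>j<length cols. set (cols ! j))"
proof -
  have "set cols = (\<lambda>j. cols ! j) ` {..<length cols}"
    by (auto simp: in_set_conv_nth image_iff)
  then show ?thesis unfolding boxes_def by simp
qed

lemma boxes_list_update:
  assumes "c < length cols" "set (cols ! c) \<subseteq> set v"
  shows "boxes (cols[c := v]) = boxes cols \<union> set v"
proof -
  have "set (cols[c := v] ! j) = (if j = c then set v else set (cols ! j))" if "j < length cols" for j
    using that by (simp add: nth_list_update)
  then show ?thesis
    using assms unfolding boxes_conv_nth by (auto split: if_splits)
qed

lemma sum_list_eq_sum_pos_minus_count:
  assumes "\<forall>a\<in>set xs. 0 < a \<or> a = (-1::int)"
  shows "sum_list xs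
    = sum_list (filter (\<lambda>a. 0 < a) xs) - int (length (filter (\<lambda>a. \<not> 0 < a) xs))"
  using assms by (induction xs) auto

lemma in_Dk_sum_eq_0:
  assumes "in_Dk ks D"
  shows "sum_list D = 0"
proof -
  have up: "filter (\<lambda>a. 0 < a) D = map int ks" and pm: "\<forall>a\<in>set D. 0 < a \<or> a = -1"
    and len: "length D = length ks + sum_list ks"
    using assms by (auto simp: in_Dk_def bigN_def)
  have "length (filter (\<lambda>a. \<not> 0 < a) D) = sum_list ks"
    using sum_length_filter_compl[of "\<lambda>a. 0 < a" D] up len by simp
  then show ?thesis
    using sum_list_eq_sum_pos_minus_count[OF pm] up by (simp add: sum_list_of_nat)
qed

lemma in_Dk_prefix_sum_nonneg:
  assumes "in_Dk ks D" "j \<le> length D"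
  shows "0 \<le> sum_list (take j D)"
  using assms in_Dk_sum_eq_0[OF assms(1)] unfolding in_Dk_def
  by (cases "j < length D") auto

lemma in_Dk_hd_nonneg:
  assumes "in_Dk ks D" "D \<noteq> []"
  shows "0 \<le> hd D"
  using in_Dk_prefix_sum_nonneg[OF assms(1), of 1] assms(2) by (cases D) auto

lemma sum_eq_Suc_sum:
  assumes "finite A" "c \<in> A" "f c = Suc (g c)" "\<And>j. j \<in> A \<Longrightarrow> j \<noteq> c \<Longrightarrow> f j = g j"
  shows "sum f A = Suc (sum g A)"
proof -
  have "sum f (A - {c}) = sum g (A - {c})"
    using assms(4) by (intro sum.cong) auto
  then show ?thesis
    using assms(1-3) by (simp add: sum.remove)
qed

section \<open>Filling\<close>

text \<open>
  The state of the Filling Algorithm after the indices 1, ..., m have been placed, p columns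
  have been opened and the path has reached height h.
\<close>

definition filled :: "nat list \<Rightarrow> nat list list \<Rightarrow> nat \<Rightarrow> nat \<Rightarrow> int \<Rightarrow> bool" where
  "filled ks cols p m h \<longleftrightarrow>
     length cols = length ks \<and> p \<le> length ks \<and>
     (\<forall>j<length ks. cols ! j = [] \<longleftrightarrow> p \<le> j) \<and>
     (\<forall>j<length ks. length (cols ! j) \<le> ks ! j + 1 \<and> sorted_wrt (<) (cols ! j)) \<and>
     (\<forall>j1 j2. j1 < j2 \<longrightarrow> j2 < p \<longrightarrow> hd (cols ! j1) < hd (cols ! j2)) \<and>
     (\<forall>j1<length ks. \<forall>j2<length ks. j1 \<noteq> j2 \<longrightarrow> set (cols ! j1) \<inter> set (cols ! j2) = {}) \<and>
     boxes cols = {1..m} \<and>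
     h = int (\<Sum>j<p. ks ! j + 1 - length (cols ! j))"

lemma filled_empty: "filled ks (replicate (length ks) []) 0 0 0"
  unfolding filled_def boxes_conv_nth by auto

lemma filled_open_column:
  assumes fl: "filled ks cols p m h" and p: "p < length ks"
  shows "filled ks (cols[p := [Suc m]]) (Suc p) (Suc m) (h + int (ks ! p))"
proof -
  let ?cols' = "cols[p := [Suc m]]"
  have len: "length cols = length ks"
    and emp: "\<And>j. j < length ks \<Longrightarrow> cols ! j = [] \<longleftrightarrow> p \<le> j"
    and col: "\<And>j. j < length ks \<Longrightarrow> length (cols ! j) \<le> ks ! j + 1 \<and> sorted_wrt (<) (cols ! j)"
    and hd_mono: "\<And>j1 j2. j1 < j2 \<Longrightarrow> j2 < p \<Longrightarrow> hd (cols ! j1) < hd (cols ! j2)"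
    and disj: "\<And>j1 j2. j1 < length ks \<Longrightarrow> j2 < length ks \<Longrightarrow> j1 \<noteq> j2
      \<Longrightarrow> set (cols ! j1) \<inter> set (cols ! j2) = {}"
    and bx: "boxes cols = {1..m}" and h: "h = int (\<Sum>j<p. ks ! j + 1 - length (cols ! j))"
    using fl unfolding filled_def by blast+
  have nth': "?cols' ! j = (if j = p then [Suc m] else cols ! j)" for j
    using len p by simp
  have old: "x \<le> m" if "j < length ks" "x \<in> set (cols ! j)" for j x
    using that bx len unfolding boxes_conv_nth by auto
  show ?thesis unfolding filled_def
  proof (intro conjI allI impI)
    show "length ?cols' = length ks" "Suc p \<le> length ks" using len p by simp_all
  next
    fix j assume "j < length ks"
    then show "?cols' ! j = [] \<longleftrightarrow> Suc p \<le> j"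
      "length (?cols' ! j) \<le> ks ! j + 1" "sorted_wrt (<) (?cols' ! j)"
      using emp col nth' by auto
  next
    fix j1 j2 assume j: "j1 < j2" "j2 < Suc p"
    show "hd (?cols' ! j1) < hd (?cols' ! j2)"
    proof (cases "j2 = p")
      case True
      then have "hd (cols ! j1) \<le> m" using old[of j1 "hd (cols ! j1)"] emp[of j1] j p by simp
      then show ?thesis using True j nth' by simp
    qed (use j nth' hd_mono in simp)
  next
    fix j1 j2 assume j: "j1 < length ks" "j2 < length ks" "j1 \<noteq> j2"
    show "set (?cols' ! j1) \<inter> set (?cols' ! j2) = {}"
    proof (cases "j1 = p \<or> j2 = p")
      case True
      then show ?thesis using old[OF j(1)] old[OF j(2)] j(3) nth' by force
    qed (use disj[OF j] nth' in simp)
  next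
    have "boxes ?cols' = boxes cols \<union> {Suc m}"
      using boxes_list_update[of p cols "[Suc m]"] emp[of p] len p by simp
    then show "boxes ?cols' = {1..Suc m}"
      using bx by auto
  next
    have "(\<Sum>j<Suc p. ks ! j + 1 - length (?cols' ! j))
        = (\<Sum>j<p. ks ! j + 1 - length (cols ! j)) + ks ! p"
      using nth' by simp
    then show "h + int (ks ! p) = int (\<Sum>j<Suc p. ks ! j + 1 - length (?cols' ! j))"
      using h by simp
  qed
qed

lemma filled_extend_column:
  assumes fl: "filled ks cols p m h" and c: "c < p" "length (cols ! c) < ks ! c + 1"
  shows "filled ks (cols[c := cols ! c @ [Suc m]]) p (Suc m) (h - 1)"
proof -
  let ?cols' = "cols[c := cols ! c @ [Suc m]]"
  have len: "length cols = length ks" and pn: "p \<le> length ks"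
    and emp: "\<And>j. j < length ks \<Longrightarrow> cols ! j = [] \<longleftrightarrow> p \<le> j"
    and col: "\<And>j. j < length ks \<Longrightarrow> length (cols ! j) \<le> ks ! j + 1 \<and> sorted_wrt (<) (cols ! j)"
    and hd_mono: "\<And>j1 j2. j1 < j2 \<Longrightarrow> j2 < p \<Longrightarrow> hd (cols ! j1) < hd (cols ! j2)"
    and disj: "\<And>j1 j2. j1 < length ks \<Longrightarrow> j2 < length ks \<Longrightarrow> j1 \<noteq> j2
      \<Longrightarrow> set (cols ! j1) \<inter> set (cols ! j2) = {}"
    and bx: "boxes cols = {1..m}" and h: "h = int (\<Sum>j<p. ks ! j + 1 - length (cols ! j))"
    using fl unfolding filled_def by blast+
  have cn: "c < length ks" using c pn by simp
  have nth': "?cols' ! j = (if j = c then cols ! c @ [Suc m] else cols ! j)" for j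
    using len cn by simp
  have old: "x \<le> m" if "j < length ks" "x \<in> set (cols ! j)" for j x
    using that bx len unfolding boxes_conv_nth by auto
  have c_ne: "cols ! c \<noteq> []" using emp[OF cn] c by simp
  show ?thesis unfolding filled_def
  proof (intro conjI allI impI)
    show "length ?cols' = length ks" "p \<le> length ks" using len pn by simp_all
  next
    fix j assume j: "j < length ks"
    show "?cols' ! j = [] \<longleftrightarrow> p \<le> j" "length (?cols' ! j) \<le> ks ! j + 1"
      using emp[OF j] col[OF j] nth' c by auto
    show "sorted_wrt (<) (?cols' ! j)"
      using col[OF j] old[OF cn] nth' by (auto simp: sorted_wrt_append less_Suc_eq_le)
  next
    fix j1 j2 assume "j1 < j2" "j2 < p"
    then show "hd (?cols' ! j1) < hd (?cols' ! j2)"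
      using hd_mono emp pn c_ne nth' by auto
  next
    fix j1 j2 assume j: "j1 < length ks" "j2 < length ks" "j1 \<noteq> j2"
    show "set (?cols' ! j1) \<inter> set (?cols' ! j2) = {}"
    proof (cases "j1 = c \<or> j2 = c")
      case True
      then show ?thesis using disj[OF j] old[OF j(1)] old[OF j(2)] j(3) nth' by force
    qed (use disj[OF j] nth' in simp)
  next
    have "boxes ?cols' = boxes cols \<union> set (cols ! c @ [Suc m])"
      by (rule boxes_list_update) (use len cn in auto)
    moreover have "set (cols ! c) \<subseteq> boxes cols"
      using cn len unfolding boxes_conv_nth by auto
    ultimately show "boxes ?cols' = {1..Suc m}"
      using bx by auto
  next
    have "(\<Sum>j<p. ks ! j + 1 - length (cols ! j)) = Suc (\<Sum>j<p. ks ! j + 1 - length (?cols' ! j))"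
      using c nth' by (intro sum_eq_Suc_sum) auto
    then show "h - 1 = int (\<Sum>j<p. ks ! j + 1 - length (?cols' ! j))"
      using h by simp
  qed
qed

lemma fill_step_minus_1:
  assumes "active ks cols j"
  obtains c where "active ks cols c" "fill_step ks cols (i, -1) = cols[c := cols ! c @ [i]]"
proof -
  let ?S = "{last (cols ! j) | j. active ks cols j}"
  have "finite ?S"
    using finite_subset[of "{j. active ks cols j}" "{..<length ks}"]
    by (auto simp: active_def)
  then have "Min ?S \<in> ?S" using assms by (intro Min_in) auto
  then have "\<exists>j. active ks cols j \<and> last (cols ! j) = Min ?S" by auto
  then have "active ks cols (LEAST j. active ks cols j \<and> last (cols ! j) = Min ?S)"
    by (rule LeastI2_ex) simp
  then show ?thesis
    by (rule that) (simp add: fill_step_def Let_def)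
qed

lemma filled_fill_step_up:
  assumes fl: "filled ks cols p m h" and p: "p < length ks" and a: "a \<noteq> -1"
  shows "filled ks (fill_step ks cols (Suc m, a)) (Suc p) (Suc m) (h + int (ks ! p))"
proof -
  have "(LEAST j. j < length ks \<and> cols ! j = []) = p"
    using fl p by (intro Least_equality) (auto simp: filled_def)
  then have "fill_step ks cols (Suc m, a) = cols[p := [Suc m]]"
    using a by (simp add: fill_step_def)
  then show ?thesis
    using filled_open_column[OF fl p] by simp
qed

lemma filled_fill_step_down:
  assumes fl: "filled ks cols p m h" and h: "1 \<le> h"
  shows "filled ks (fill_step ks cols (Suc m, -1)) p (Suc m) (h - 1)"
proof -
  have pn: "p \<le> length ks" and emp: "\<And>j. j < length ks \<Longrightarrow> cols ! j = [] \<longleftrightarrow> p \<le> j"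
    and len: "\<And>j. j < length ks \<Longrightarrow> length (cols ! j) \<le> ks ! j + 1"
    and hsum: "h = int (\<Sum>j<p. ks ! j + 1 - length (cols ! j))"
    using fl by (auto simp: filled_def)
  have "(\<Sum>j<p. ks ! j + 1 - length (cols ! j)) \<noteq> 0"
    using h hsum by linarith
  then obtain j where j: "j \<in> {..<p}" "ks ! j + 1 - length (cols ! j) \<noteq> 0"
    by (meson sum.neutral)
  then have "j < length ks" using pn by simp
  then have "active ks cols j"
    using j emp[of j] unfolding active_def by auto
  then obtain c where c: "active ks cols c"
    and step: "fill_step ks cols (Suc m, -1) = cols[c := cols ! c @ [Suc m]]"
    by (rule fill_step_minus_1)
  have "c < p" "length (cols ! c) < ks ! c + 1"
    using c emp len by (auto simp: active_def order_less_le)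
  then show ?thesis
    unfolding step by (rule filled_extend_column[OF fl])
qed

lemma filled_foldl_fill_step:
  assumes "filled ks cols p m h"
    and "\<forall>a\<in>set xs. 0 < a \<or> a = -1"
    and "prefix (filter (\<lambda>a. 0 < a) xs) (map int (drop p ks))"
    and "\<forall>j\<le>length xs. 0 \<le> h + sum_list (take j xs)"
  shows "filled ks (foldl (fill_step ks) cols (zip [Suc m..<Suc m + length xs] xs))
           (p + length (filter (\<lambda>a. 0 < a) xs)) (m + length xs) (h + sum_list xs)"
  using assms
proof (induction xs arbitrary: cols p m h)
  case Nil
  then show ?case by simp
next
  case (Cons a xs)
  have zip: "zip [Suc m..<Suc m + length (a # xs)] (a # xs)
      = (Suc m, a) # zip [Suc (Suc m)..<Suc (Suc m) + length xs] xs"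
    by (simp add: upt_conv_Cons del: upt_Suc)
  have sums: "\<forall>j\<le>length xs. 0 \<le> (h + a) + sum_list (take j xs)"
    using Cons.prems(4) by (auto dest: spec[of _ "Suc _"])
  show ?case
  proof (cases "0 < a")
    case True
    then have pre: "prefix (a # filter (\<lambda>a. 0 < a) xs) (map int (drop p ks))"
      using Cons.prems(3) by simp
    then have p: "p < length ks"
      by (cases "p < length ks") auto
    then have "drop p ks = ks ! p # drop (Suc p) ks"
      by (simp add: Cons_nth_drop_Suc)
    then have a: "a = int (ks ! p)"
      and rest: "prefix (filter (\<lambda>a. 0 < a) xs) (map int (drop (Suc p) ks))"
      using pre by simp_all
    have "filled ks (fill_step ks cols (Suc m, a)) (Suc p) (Suc m) (h + a)"
      using filled_fill_step_up[OF Cons.prems(1) p] True a by simp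
    from Cons.IH[OF this _ rest sums] Cons.prems(2) True
    show ?thesis unfolding zip by (simp add: algebra_simps)
  next
    case False
    then have a: "a = -1" using Cons.prems(2) by simp
    have "1 \<le> h" using Cons.prems(4) a by (auto dest: spec[of _ 1])
    then have "filled ks (fill_step ks cols (Suc m, a)) p (Suc m) (h + a)"
      using filled_fill_step_down[OF Cons.prems(1)] a by simp
    from Cons.IH[OF this _ _ sums] Cons.prems(2,3) False
    show ?thesis unfolding zip by (simp add: algebra_simps)
  qed
qed

lemma fillT_eq_foldl:
  assumes "ks \<noteq> []" "hd D \<noteq> -1" "length D = bigN ks"
  shows "fillT ks D
    = foldl (fill_step ks) (replicate (length ks) []) (zip [Suc 0..<Suc 0 + length D] D)"
proof -
  have "bigN ks \<noteq> 0" using assms(1) by (simp add: bigN_def)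
  then obtain d D' where D: "D = d # D'" using assms(3) by (cases D) auto
  have "(LEAST j. j < length ks \<and> replicate (length ks) [] ! j = ([] :: nat list)) = 0"
    using assms(1) by (intro Least_equality) auto
  then have "fill_step ks (replicate (length ks) []) (1, d) = [1] # replicate (length ks - 1) []"
    using assms(1,2) D by (cases ks) (auto simp: fill_step_def)
  moreover have "[Suc 0..<Suc 0 + length D] = 1 # [2..<bigN ks + 1]"
    using assms(3) D by (simp add: upt_conv_Cons numeral_2_eq_2)
  ultimately show ?thesis
    using D by (simp add: fillT_def)
qed

lemma filled_fillT:
  assumes "in_Dk ks D" "ks \<noteq> []"
  shows "filled ks (fillT ks D) (length ks) (bigN ks) 0"
proof -
  have len: "length D = bigN ks" and up: "filter (\<lambda>a. 0 < a) D = map int ks"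
    and pm: "\<forall>a\<in>set D. 0 < a \<or> a = -1"
    using assms(1) by (simp_all add: in_Dk_def)
  have "D \<noteq> []" using len assms(2) by (auto simp: bigN_def)
  then have "hd D \<noteq> -1" using in_Dk_hd_nonneg[OF assms(1)] by fastforce
  then have "fillT ks D
      = foldl (fill_step ks) (replicate (length ks) []) (zip [Suc 0..<Suc 0 + length D] D)"
    using fillT_eq_foldl assms(2) len by blast
  moreover have "filled ks
      (foldl (fill_step ks) (replicate (length ks) []) (zip [Suc 0..<Suc 0 + length D] D))
      (0 + length (filter (\<lambda>a. 0 < a) D)) (0 + length D) (0 + sum_list D)"
    using filled_foldl_fill_step[OF filled_empty pm] up in_Dk_prefix_sum_nonneg[OF assms(1)] by simp
  ultimately show ?thesis
    using up len in_Dk_sum_eq_0[OF assms(1)] by simp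
qed

section \<open>Ranks\<close>

locale tableau =
  fixes ks :: "nat list" and T :: "nat list list" and N :: nat
  assumes length_T: "length T = length ks"
    and length_col: "j < length ks \<Longrightarrow> length (T ! j) = ks ! j + 1"
    and sorted_col: "j < length ks \<Longrightarrow> sorted_wrt (<) (T ! j)"
    and hd_col_less: "j1 < j2 \<Longrightarrow> j2 < length ks \<Longrightarrow> hd (T ! j1) < hd (T ! j2)"
    and cols_disjoint: "j1 < length ks \<Longrightarrow> j2 < length ks \<Longrightarrow> j1 \<noteq> j2
      \<Longrightarrow> set (T ! j1) \<inter> set (T ! j2) = {}"
    and boxes_T: "boxes T = {1..N}"

lemma tableau_if_filled:
  assumes fl: "filled ks T (length ks) N 0"
  shows "tableau ks T N"
proof -
  have len: "\<And>j. j < length ks \<Longrightarrow> length (T ! j) \<le> ks ! j + 1"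
    and "int (\<Sum>j<length ks. ks ! j + 1 - length (T ! j)) = 0"
    using fl unfolding filled_def by auto
  then have "(\<Sum>j<length ks. ks ! j + 1 - length (T ! j)) = 0"
    by (simp only: of_nat_eq_0_iff)
  then have full: "\<forall>j\<in>{..<length ks}. ks ! j + 1 - length (T ! j) = 0"
    by (simp only: sum_eq_0_iff finite_lessThan)
  have "length (T ! j) = ks ! j + 1" if "j < length ks" for j
  proof -
    have "ks ! j + 1 - length (T ! j) = 0"
      using full that by blast
    then show ?thesis
      using len[OF that] by linarith
  qed
  then show ?thesis
    using fl unfolding tableau_def filled_def by auto
qed

context tableau
begin

lemma nth_mem_boxes: "c < length ks \<Longrightarrow> r < length (T ! c) \<Longrightarrow> T ! c ! r \<in> boxes T"
  using nth_mem unfolding boxes_conv_nth length_T by blast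

lemma boxesE:
  assumes "x \<in> boxes T"
  obtains c r where "c < length ks" "r < length (T ! c)" "x = T ! c ! r"
  using assms unfolding boxes_conv_nth length_T by (auto simp: in_set_conv_nth)

lemma finite_boxes: "finite (boxes T)"
  by (simp add: boxes_T)

lemma col_of_nth:
  assumes "c < length ks" "r < length (T ! c)"
  shows "col_of T (T ! c ! r) = c"
  unfolding col_of_def
proof (rule the_equality)
  show "c < length T \<and> T ! c ! r \<in> set (T ! c)"
    using assms length_T by simp
  show "j = c" if "j < length T \<and> T ! c ! r \<in> set (T ! j)" for j
    using that cols_disjoint[of j c] assms length_T nth_mem by fastforce
qed

lemma row_of_nth:
  assumes "c < length ks" "r < length (T ! c)"
  shows "row_of T (T ! c ! r) = r + 1"
proof -
  have "distinct (T ! c)"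
    using sorted_col[OF assms(1)] by (simp add: strict_sorted_iff)
  then have "(THE r'. r' < length (T ! c) \<and> T ! c ! r' = T ! c ! r) = r"
    using assms(2) by (intro the_equality) (auto simp: nth_eq_iff_index_eq)
  then show ?thesis
    unfolding row_of_def col_of_nth[OF assms] by simp
qed

definition top_rank :: "nat \<Rightarrow> nat" where
  "top_rank c = base_list T (length ks) ! c"

lemma length_base_list: "length (base_list T j) = j"
  by (induction j) (auto simp: Let_def)

lemma nth_base_list: "c < j \<Longrightarrow> base_list T j ! c = base_list T (Suc c) ! c"
proof (induction j)
  case (Suc j)
  then show ?case
    by (cases "c = j") (auto simp: Let_def nth_append length_base_list)
qed simp

lemma rank_nth:
  assumes "c < length ks" "r < length (T ! c)"
  shows "rank T (T ! c ! r) = top_rank c + r"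
  unfolding rank_def top_rank_def
  using col_of_nth[OF assms] row_of_nth[OF assms] length_T by simp

lemma top_rank_0: "0 < length ks \<Longrightarrow> top_rank 0 = 0"
  unfolding top_rank_def using nth_base_list[of 0 "length ks"] by simp

lemma hd_col_eq_nth: "c < length ks \<Longrightarrow> hd (T ! c) = T ! c ! 0"
  using length_col[of c] by (cases "T ! c") auto

lemma hd_col_le:
  assumes "c < length ks" "r < length (T ! c)"
  shows "hd (T ! c) \<le> T ! c ! r"
proof (cases r)
  case (Suc r')
  then have "T ! c ! 0 < T ! c ! r"
    using sorted_col[OF assms(1)] assms(2) by (simp add: sorted_wrt_nth_less)
  then show ?thesis
    using hd_col_eq_nth[OF assms(1)] by simp
qed (use hd_col_eq_nth[OF assms(1)] in simp)

lemma rank_hd_col_pred: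
  assumes j: "0 < j" "j < length ks"
  shows "hd (T ! j) - 1 \<in> boxes T" "rank T (hd (T ! j) - 1) = rank T (hd (T ! j))"
proof -
  define A where "A = hd (T ! j) - 1"
  have "0 < length ks" using j by linarith
  then have "hd (T ! 0) \<in> boxes T"
    using nth_mem_boxes[of 0 0] hd_col_eq_nth[of 0] length_col[of 0] by simp
  then have "1 < hd (T ! j)"
    using hd_col_less[of 0 j] j boxes_T by auto
  moreover have "hd (T ! j) \<in> boxes T"
    using j nth_mem_boxes[of j 0] hd_col_eq_nth[of j] length_col[of j] by simp
  ultimately show A: "hd (T ! j) - 1 \<in> boxes T"
    using boxes_T by auto
  then obtain c r where cr: "c < length ks" "r < length (T ! c)" "A = T ! c ! r"
    unfolding A_def by (rule boxesE)
  have "c < j"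
  proof (rule ccontr)
    assume "\<not> c < j"
    then have "hd (T ! j) \<le> hd (T ! c)"
      using hd_col_less[of j c] cr(1) by (cases "j = c") auto
    then show False
      using hd_col_le[OF cr(1,2)] cr(3) \<open>1 < hd (T ! j)\<close> unfolding A_def by simp
  qed
  have "rank T (hd (T ! j)) = base_list T (Suc j) ! j"
    using rank_nth[of j 0] j hd_col_eq_nth[of j] length_col[of j] nth_base_list[of j "length ks"]
    unfolding top_rank_def by simp
  also have "\<dots> = base_list T j ! col_of T A + (row_of T A - 1)"
    using j by (simp add: Let_def nth_append length_base_list A_def)
  also have "\<dots> = base_list T j ! c + r"
    using col_of_nth[OF cr(1,2)] row_of_nth[OF cr(1,2)] cr(3) by simp
  also have "\<dots> = rank T A"
    using rank_nth[OF cr(1,2)] cr(3) \<open>c < j\<close> j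
      nth_base_list[of c j] nth_base_list[of c "length ks"]
    unfolding top_rank_def by simp
  finally show "rank T (hd (T ! j) - 1) = rank T (hd (T ! j))"
    unfolding A_def by simp
qed

text \<open>
  The target rank of a box is the rank of the box cyclically above it; as this permutes every
  column, ranks and target ranks are equidistributed.
\<close>

definition above :: "nat \<Rightarrow> nat" where
  "above x = T ! col_of T x ! (if row_of T x = 1 then ks ! col_of T x else row_of T x - 2)"

lemma target_rank_eq_rank_above: "target_rank ks T x = rank T (above x)"
  unfolding target_rank_def above_def Let_def by simp

lemma above_nth:
  assumes "c < length ks" "r < length (T ! c)"
  shows "above (T ! c ! r) = T ! c ! (if r = 0 then ks ! c else r - 1)"
  unfolding above_def col_of_nth[OF assms] row_of_nth[OF assms] by simp

lemma bij_betw_above: "bij_betw above (boxes T) (boxes T)"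
proof -
  define f where "f c r = (if r = 0 then ks ! c else r - 1)" for c r :: nat
  have f: "f c r < length (T ! c)" if "c < length ks" "r < length (T ! c)" for c r
    using that length_col[of c] unfolding f_def by auto
  have sub: "above ` boxes T \<subseteq> boxes T"
  proof
    fix y assume "y \<in> above ` boxes T"
    then obtain c r where "c < length ks" "r < length (T ! c)" "y = above (T ! c ! r)"
      by (auto elim: boxesE)
    then show "y \<in> boxes T"
      using above_nth nth_mem_boxes f unfolding f_def by simp
  qed
  have "inj_on above (boxes T)"
  proof (rule inj_onI)
    fix x y assume "x \<in> boxes T" "y \<in> boxes T" and eq: "above x = above y"
    obtain c r where x: "c < length ks" "r < length (T ! c)" "x = T ! c ! r"
      using \<open>x \<in> boxes T\<close> by (rule boxesE)
    obtain c' r' where y: "c' < length ks" "r' < length (T ! c')" "y = T ! c' ! r'"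
      using \<open>y \<in> boxes T\<close> by (rule boxesE)
    have eq': "T ! c ! f c r = T ! c' ! f c' r'"
      using eq x y above_nth unfolding f_def by simp
    then have "c = c'"
      using col_of_nth[OF x(1) f[OF x(1,2)]] col_of_nth[OF y(1) f[OF y(1,2)]] by simp
    moreover have "f c r = f c' r'"
      using eq' row_of_nth[OF x(1) f[OF x(1,2)]] row_of_nth[OF y(1) f[OF y(1,2)]] by simp
    ultimately have "r = r'"
      using x(2) y(2) length_col[OF x(1)] unfolding f_def
      by (cases "r = 0"; cases "r' = 0") simp_all
    then show "x = y"
      using x y \<open>c = c'\<close> by simp
  qed
  then show ?thesis
    using endo_inj_surj[OF finite_boxes sub] by (simp add: bij_betw_def)
qed

lemma card_target_rank_eq_card_rank:
  "card {x \<in> boxes T. target_rank ks T x = \<rho>} = card {x \<in> boxes T. rank T x = \<rho>}"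
proof -
  have "inj_on above {x \<in> boxes T. rank T (above x) = \<rho>}"
    using bij_betw_above by (auto simp: bij_betw_def intro: inj_on_subset)
  then have "card {x \<in> boxes T. rank T (above x) = \<rho>}
      = card (above ` {x \<in> boxes T. rank T (above x) = \<rho>})"
    by (rule card_image[symmetric])
  also have "above ` {x \<in> boxes T. rank T (above x) = \<rho>} = {y \<in> boxes T. rank T y = \<rho>}"
    using bij_betw_above by (auto simp: bij_betw_def)
  finally show ?thesis
    unfolding target_rank_eq_rank_above .
qed

lemma target_rank_least:
  assumes x: "x \<in> boxes T" "rank T x \<noteq> 0"
    and least: "\<And>y. y \<in> boxes T \<Longrightarrow> rank T y = rank T x \<Longrightarrow> x \<le> y"
  shows "target_rank ks T x = rank T x - 1"
proof -
  obtain c r where cr: "c < length ks" "r < length (T ! c)" "x = T ! c ! r"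
    using x(1) by (rule boxesE)
  have "r \<noteq> 0"
  proof
    assume "r = 0"
    then have hd: "hd (T ! c) = x" using hd_col_eq_nth[OF cr(1)] cr(3) by simp
    have "c \<noteq> 0"
    proof
      assume "c = 0"
      then have "rank T x = 0"
        using rank_nth[OF cr(1,2)] top_rank_0 cr(1,3) \<open>r = 0\<close> by simp
      then show False using x(2) by simp
    qed
    then have "x - 1 \<in> boxes T" "rank T (x - 1) = rank T x"
      using rank_hd_col_pred[of c] cr(1) hd by simp_all
    moreover have "1 \<le> x" using x(1) boxes_T by simp
    ultimately show False using least[of "x - 1"] by simp
  qed
  then have "above x = T ! c ! (r - 1)"
    using above_nth[OF cr(1,2)] cr(3) by simp
  moreover have "rank T (T ! c ! (r - 1)) = top_rank c + (r - 1)"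
    using rank_nth[OF cr(1)] cr(2) by simp
  ultimately show ?thesis
    using target_rank_eq_rank_above rank_nth[OF cr(1,2)] cr(3) \<open>r \<noteq> 0\<close> by simp
qed

lemma rank_0_box: "0 < length ks \<Longrightarrow> T ! 0 ! 0 \<in> boxes T \<and> rank T (T ! 0 ! 0) = 0"
  using nth_mem_boxes[of 0 0] rank_nth[of 0 0] top_rank_0 length_col[of 0] by simp

end

section \<open>Walking\<close>

lemma card_Collect_insert:
  assumes "finite M" "x \<notin> M"
  shows "card {y \<in> insert x M. P y} = card {y \<in> M. P y} + (if P x then 1 else 0)"
proof (cases "P x")
  case True
  then have "{y \<in> insert x M. P y} = insert x {y \<in> M. P y}" by auto
  then show ?thesis using True assms by simp
next
  case False
  then have "{y \<in> insert x M. P y} = {y \<in> M. P y}" by auto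
  then show ?thesis using False by simp
qed

locale balanced_walk =
  fixes ks :: "nat list" and T :: "nat list list" and s :: nat
  assumes finite_boxes_T: "finite (boxes T)"
    and balanced: "\<And>\<rho>. card {x \<in> boxes T. target_rank ks T x = \<rho>}
      = card {x \<in> boxes T. rank T x = \<rho>}"
    and least_descends: "\<And>x. x \<in> boxes T \<Longrightarrow> rank T x \<noteq> 0 \<Longrightarrow>
      (\<And>y. y \<in> boxes T \<Longrightarrow> rank T y = rank T x \<Longrightarrow> x \<le> y)
      \<Longrightarrow> target_rank ks T x = rank T x - 1"
    and start_box: "s \<in> boxes T" and start_rank: "rank T s = 0"
begin

definition candidates :: "nat set \<Rightarrow> nat \<Rightarrow> nat set" where
  "candidates M cur = {x \<in> boxes T. x \<notin> M \<and> rank T x = target_rank ks T cur}"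

text \<open>
  Read as a trail of edges rank x to target_rank x, the visited boxes M lead from vertex 0 to
  vertex target_rank cur, whence the degree count; the last clause says that boxes of equal
  rank are visited in decreasing order of index.
\<close>

definition walk_inv :: "nat set \<Rightarrow> nat \<Rightarrow> bool" where
  "walk_inv M cur \<longleftrightarrow> M \<subseteq> boxes T \<and> s \<in> M \<and>
     (\<forall>\<rho>. card {x \<in> M. target_rank ks T x = \<rho>} + (if \<rho> = 0 then 1 else 0)
        = card {x \<in> M. rank T x = \<rho>} + (if target_rank ks T cur = \<rho> then 1 else 0)) \<and>
     (\<forall>x \<in> M - {s}. \<forall>y \<in> boxes T. rank T y = rank T x \<longrightarrow> x < y \<longrightarrow> y \<in> M)"

lemma walk_inv_start: "walk_inv {s} s"
  unfolding walk_inv_def using card_Collect_insert[of "{}" s] start_box start_rank by simp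

lemma walk_inv_step:
  assumes inv: "walk_inv M cur" and x: "x = Max (candidates M cur)" "candidates M cur \<noteq> {}"
  shows "walk_inv (insert x M) x"
proof -
  have fin: "finite (candidates M cur)"
    using finite_boxes_T by (simp add: candidates_def)
  have "x \<in> candidates M cur"
    using x fin by simp
  then have xB: "x \<in> boxes T" "x \<notin> M" "rank T x = target_rank ks T cur"
    by (auto simp: candidates_def)
  have greatest: "y \<le> x" if "y \<in> candidates M cur" for y
    using x fin that by simp
  have MB: "M \<subseteq> boxes T" and "finite M"
    using inv finite_boxes_T by (auto simp: walk_inv_def intro: finite_subset)
  show ?thesis
    unfolding walk_inv_def
  proof (intro conjI allI ballI impI)
    show "insert x M \<subseteq> boxes T" "s \<in> insert x M"
      using MB xB inv by (auto simp: walk_inv_def)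
  next
    fix \<rho>
    show "card {y \<in> insert x M. target_rank ks T y = \<rho>} + (if \<rho> = 0 then 1 else 0)
        = card {y \<in> insert x M. rank T y = \<rho>} + (if target_rank ks T x = \<rho> then 1 else 0)"
      using inv xB card_Collect_insert[OF \<open>finite M\<close> xB(2)] by (simp add: walk_inv_def)
  next
    fix z y assume z: "z \<in> insert x M - {s}" and y: "y \<in> boxes T" "rank T y = rank T z" "z < y"
    show "y \<in> insert x M"
    proof (cases "z = x")
      case True
      then show ?thesis
        using greatest[of y] y xB by (force simp: candidates_def)
    next
      case False
      then show ?thesis
        using inv z y by (auto simp: walk_inv_def)
    qed
  qed
qed

lemma card_rank_class_visited:
  assumes "M \<subseteq> boxes T" "\<forall>x \<in> boxes T. rank T x = \<rho> \<longrightarrow> x \<in> M"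
  shows "card {x \<in> M. rank T x = \<rho>} = card {x \<in> boxes T. rank T x = \<rho>}"
  using assms by (intro arg_cong[where f = card]) blast

lemma target_rank_class_visited:
  assumes "M \<subseteq> boxes T"
    and "card {x \<in> boxes T. target_rank ks T x = \<rho>} \<le> card {x \<in> M. target_rank ks T x = \<rho>}"
  shows "\<forall>x \<in> boxes T. target_rank ks T x = \<rho> \<longrightarrow> x \<in> M"
proof -
  have "{x \<in> M. target_rank ks T x = \<rho>} = {x \<in> boxes T. target_rank ks T x = \<rho>}"
    using assms finite_boxes_T by (intro card_seteq) auto
  then show ?thesis by blast
qed

lemma walk_stuck_balanced:
  assumes inv: "walk_inv M cur" and stuck: "candidates M cur = {}"
  shows "target_rank ks T cur = 0"
    "\<And>\<rho>. card {x \<in> M. target_rank ks T x = \<rho>} = card {x \<in> M. rank T x = \<rho>}"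
proof -
  define v where "v = target_rank ks T cur"
  have MB: "M \<subseteq> boxes T"
    using inv by (simp add: walk_inv_def)
  have count: "card {x \<in> M. target_rank ks T x = \<rho>} + (if \<rho> = 0 then 1 else 0)
      = card {x \<in> M. rank T x = \<rho>} + (if v = \<rho> then 1 else 0)" for \<rho>
    using inv by (simp add: walk_inv_def v_def)
  have "\<forall>x \<in> boxes T. rank T x = v \<longrightarrow> x \<in> M"
    using stuck by (auto simp: candidates_def v_def)
  then have visited: "card {x \<in> M. rank T x = v} = card {x \<in> boxes T. target_rank ks T x = v}"
    using card_rank_class_visited[OF MB] balanced by simp
  show v0: "target_rank ks T cur = 0"
    unfolding v_def[symmetric]
  proof (rule ccontr)
    assume "v \<noteq> 0"
    then have "card {x \<in> M. target_rank ks T x = v} = card {x \<in> boxes T. target_rank ks T x = v} + 1"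
      using count[of v] visited by simp
    moreover have
      "card {x \<in> M. target_rank ks T x = v} \<le> card {x \<in> boxes T. target_rank ks T x = v}"
      using MB finite_boxes_T by (intro card_mono) auto
    ultimately show False by simp
  qed
  show "card {x \<in> M. target_rank ks T x = \<rho>} = card {x \<in> M. rank T x = \<rho>}" for \<rho>
    using count[of \<rho>] v0 v_def by (cases "\<rho> = 0") auto
qed

lemma walk_candidates_nonempty:
  assumes inv: "walk_inv M cur" and unvisited: "M \<noteq> boxes T"
  shows "candidates M cur \<noteq> {}"
proof
  assume stuck: "candidates M cur = {}"
  have MB: "M \<subseteq> boxes T"
    using inv by (simp add: walk_inv_def)
  have greedy: "\<And>x y. x \<in> M - {s} \<Longrightarrow> y \<in> boxes T \<Longrightarrow> rank T y = rank T x \<Longrightarrow> x < y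
      \<Longrightarrow> y \<in> M"
    using inv unfolding walk_inv_def by blast
  have rank_0_visited: "\<forall>x \<in> boxes T. rank T x = 0 \<longrightarrow> x \<in> M"
    using stuck walk_stuck_balanced(1)[OF inv stuck] by (auto simp: candidates_def)
  define \<rho> where "\<rho> = Min (rank T ` (boxes T - M))"
  have fin: "finite (boxes T - M)" and ne: "boxes T - M \<noteq> {}"
    using finite_boxes_T MB unvisited by auto
  have \<rho>_min: "\<rho> \<le> rank T x" if "x \<in> boxes T - M" for x
    using fin that unfolding \<rho>_def by simp
  have "\<rho> \<in> rank T ` (boxes T - M)"
    unfolding \<rho>_def using fin ne by (intro Min_in) auto
  then obtain w where w: "w \<in> boxes T - M" "rank T w = \<rho>"
    by blast
  have "\<rho> \<noteq> 0"
    using w rank_0_visited by auto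
  define m where "m = Min {x \<in> boxes T. rank T x = \<rho>}"
  have fin\<rho>: "finite {x \<in> boxes T. rank T x = \<rho>}"
    using finite_boxes_T by simp
  have m: "m \<in> boxes T" "rank T m = \<rho>"
    using Min_in[OF fin\<rho>] w unfolding m_def by auto
  have m_least: "m \<le> y" if "y \<in> boxes T" "rank T y = \<rho>" for y
    using fin\<rho> that unfolding m_def by simp
  have "m \<notin> M"
  proof
    assume "m \<in> M"
    moreover have "m \<noteq> s"
      using m start_rank \<open>\<rho> \<noteq> 0\<close> by auto
    ultimately have "w \<in> M"
      using greedy[of m w] m_least[of w] w m by (cases "m = w") auto
    then show False using w by simp
  qed
  have "target_rank ks T m = rank T m - 1"
    by (rule least_descends[OF m(1)]) (use m m_least \<open>\<rho> \<noteq> 0\<close> in auto)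
  then have tg_m: "target_rank ks T m = \<rho> - 1"
    using m(2) by simp
  have "\<forall>x \<in> boxes T. rank T x = \<rho> - 1 \<longrightarrow> x \<in> M"
    using \<rho>_min \<open>\<rho> \<noteq> 0\<close> by force
  then have "card {x \<in> M. target_rank ks T x = \<rho> - 1}
      = card {x \<in> boxes T. target_rank ks T x = \<rho> - 1}"
    using card_rank_class_visited[OF MB] walk_stuck_balanced(2)[OF inv stuck] balanced by simp
  then have "\<forall>x \<in> boxes T. target_rank ks T x = \<rho> - 1 \<longrightarrow> x \<in> M"
    by (intro target_rank_class_visited[OF MB]) simp
  with \<open>m \<notin> M\<close> m(1) tg_m show False
    by blast
qed

lemma length_walk:
  assumes "walk_inv M cur" "card (boxes T - M) \<le> f"
  shows "length (walk ks T f cur M) = card (boxes T - M)"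
  using assms
proof (induction f arbitrary: M cur)
  case (Suc f)
  show ?case
  proof (cases "M = boxes T")
    case True
    then show ?thesis
      by simp
  next
    case False
    define x where "x = Max (candidates M cur)"
    have ne: "candidates M cur \<noteq> {}"
      using walk_candidates_nonempty[OF Suc.prems(1) False] .
    then have "x \<in> candidates M cur"
      using finite_boxes_T unfolding x_def candidates_def by (intro Max_in) auto
    then have x: "x \<in> boxes T - M"
      by (simp add: candidates_def)
    have "card (boxes T - insert x M) = card ((boxes T - M) - {x})"
      by (rule arg_cong[where f = card]) blast
    also have "\<dots> = card (boxes T - M) - 1"
      by (rule card_Diff_singleton[OF x])
    finally have card_step: "card (boxes T - insert x M) = card (boxes T - M) - 1" .
    have "card (boxes T - M) \<noteq> 0"
      using x finite_boxes_T by (metis card_0_eq empty_iff finite_Diff)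
    moreover have "walk ks T (Suc f) cur M = x # walk ks T f x (insert x M)"
      using ne by (simp add: Let_def candidates_def[symmetric] x_def)
    ultimately show ?thesis
      using Suc.IH[OF walk_inv_step[OF Suc.prems(1) x_def ne]] Suc.prems(2) card_step by simp
  qed
qed simp

end

lemma (in tableau) length_walk_from_rank_0:
  assumes "s \<in> boxes T" "rank T s = 0"
  shows "length (walk ks T N s {s}) = N - 1"
proof -
  interpret balanced_walk ks T s
    using finite_boxes card_target_rank_eq_card_rank target_rank_least assms
    by unfold_locales auto
  have "card (boxes T - {s}) = N - 1"
    using assms(1) boxes_T by simp
  then show ?thesis
    using length_walk[OF walk_inv_start] by simp
qed

theorem mainTheorem7:
  fixes ks :: "nat list" and D :: "int list"
  assumes "length ks \<ge> 1"
    and "\<forall>k\<in>set ks. k > 0"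
    and "in_Dk ks D"
  shows "length (sigma ks D) = length ks + sum_list ks"
proof -
  define T where "T = fillT ks D"
  have "0 < length ks" using assms(1) by linarith
  interpret tableau ks T "bigN ks"
    using tableau_if_filled filled_fillT[OF assms(3)] \<open>0 < length ks\<close> unfolding T_def by blast
  define s where "s = Max {x \<in> boxes T. rank T x = 0}"
  have "s \<in> {x \<in> boxes T. rank T x = 0}"
    unfolding s_def using finite_boxes rank_0_box[OF \<open>0 < length ks\<close>] by (intro Max_in) auto
  then have "length (walk ks T (bigN ks) s {s}) = bigN ks - 1"
    using length_walk_from_rank_0 by simp
  moreover have "sigma ks D = s # walk ks T (bigN ks) s {s}"
    unfolding sigma_def s_def T_def by (simp add: Let_def)
  ultimately show ?thesis
    using \<open>0 < length ks\<close> by (simp add: bigN_def)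
qed

end
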